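(* Let $r>0$, $\delta>0$, $R:=r/\delta$, and suppose $R+\tfrac12\in\mathbb{Z}$. Then for every unit-norm tight frame $\mathcal{F}$ of $\mathbb{R}^2$, $$\mathcal{E}_\delta(r,\mathcal{F})\ge \frac{32}{3\pi^{5/2}}\,\frac{\delta^{3/2}}{\sqrt r}.$$
   Context: A finite family $\mathcal{F}=\{e_j\}_{j=1}^N\subset\mathbb{R}^2$ is a unit-norm tight frame if $\|e_j\|=1$ for all $j$ and $\sum_j e_je_j^T=\frac{N}{2}I_2$. For $\delta>0$, $Q_\delta(t):=\delta\lfloor t/\delta+1/2\rfloor$, and $E_\delta(x,\mathcal{F}):=\bigl\|x-\frac{2}{N}\sum_{j=1}^N Q_\delta(\langle x,e_j\rangle)e_j\bigr\|$ (Euclidean norm). For $r>0$ set $x_\psi:=r[\cos\psi,\sin\psi]^T$ and $$\mathcal{E}_\delta(r,\mathcal{F}):=\Bigl(\int_0^{2\pi}E_\delta(x_\psi,\mathcal{F})^2\,d\psi\Bigr)^{1/2}.$$ *)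

theory Defs
  imports "HOL-Analysis.Analysis"
begin

definition untf :: "nat \<Rightarrow> (nat \<Rightarrow> real^2) \<Rightarrow> bool" where
  "untf N e \<longleftrightarrow> 0 < N \<and> (\<forall>j\<in>{1..N}. norm (e j) = 1) \<and>
     (\<Sum>j\<in>{1..N}. (\<chi> a b. e j $ a * e j $ b)) = mat (real N / 2)"

definition Qd :: "real \<Rightarrow> real \<Rightarrow> real" where
  "Qd \<delta> t = \<delta> * of_int \<lfloor>t / \<delta> + 1/2\<rfloor>"

definition Ed :: "real \<Rightarrow> real^2 \<Rightarrow> nat \<Rightarrow> (nat \<Rightarrow> real^2) \<Rightarrow> real" where
  "Ed \<delta> x N e = norm (x - (2 / real N) *\<^sub>R (\<Sum>j\<in>{1..N}. Qd \<delta> (x \<bullet> e j) *\<^sub>R e j))"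

definition xpsi :: "real \<Rightarrow> real \<Rightarrow> real^2" where
  "xpsi r \<psi> = vector [r * cos \<psi>, r * sin \<psi>]"

definition MSE :: "real \<Rightarrow> real \<Rightarrow> nat \<Rightarrow> (nat \<Rightarrow> real^2) \<Rightarrow> real" where
  "MSE \<delta> r N e = sqrt (integral {0..2*pi} (\<lambda>\<psi>. (Ed \<delta> (xpsi r \<psi>) N e)^2))"

end

theory Submission
  imports Defs
begin

(* Write eta(t) = t - Q(t) for the scalar quantization error.  By the tight-frame identity,
   E(x) = |(2/N) sum_j eta(<x,e_j>) e_j|, so Cauchy-Schwarz against x (|x| = r) gives
   E(x) >= |h(x)| with h(x) = 2/(N r) sum_j eta(<x,e_j>) <x,e_j>.  Writing e_j at angle
   theta_j, each term of h(x_psi) is G(r cos(psi - theta_j)) with G(t) = eta(t) t, and by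
   periodicity its integral over the circle is the number J = int G(r cos psi) d psi, the same
   for every j.  Hence int h = 2J/r, and Cauchy-Schwarz in L^2 gives
   int E^2 >= (2J/r)^2 / (2 pi).

   For R = k + 1/2 the quantizer is a sum of threshold functions, which yields the closed form
   J = pi r^2 - 4 delta r sum_{m=1}^k sqrt(1 - ((m - 1/2)/R)^2).  A Riemann-sum comparison
   (summation by parts against the arcs arccos((m-1/2)/R)) together with
   x - sin x >= 4 x^3 / (3 pi^2) on [0, pi/2] bounds the sum and gives
   J >= r^2 (8/(3 pi^2)) (2/R)^(3/2), from which the theorem follows by arithmetic. *)


section \<open>Frame identities and pointwise bounds on the error\<close>

lemma frame_reconstruction:
  assumes "untf N e"
  shows "(\<Sum>j\<in>{1..N}. (x \<bullet> e j) *\<^sub>R e j) = (real N / 2) *\<^sub>R (x :: real^2)"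
proof -
  have frame_op: "(\<Sum>j\<in>{1..N}. (\<chi> a b. e j $ a * e j $ b)) = (mat (real N / 2) :: real^2^2)"
    using assms unfolding untf_def by blast
  have entries: "(\<Sum>j\<in>{1..N}. e j $ b * e j $ a) = (if b = a then real N / 2 else 0)" for a b
    using arg_cong[OF frame_op, of "\<lambda>M. M $ b $ a"] by (simp add: mat_def)
  show ?thesis
  proof (subst vec_eq_iff, intro allI)
    fix a :: 2
    have "(\<Sum>j\<in>{1..N}. (x \<bullet> e j) *\<^sub>R e j) $ a = (\<Sum>j\<in>{1..N}. (\<Sum>b\<in>UNIV. x $ b * e j $ b) * e j $ a)"
      by (simp add: inner_vec_def)
    also have "\<dots> = (\<Sum>b\<in>UNIV. x $ b * (\<Sum>j\<in>{1..N}. e j $ b * e j $ a))"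
      by (simp add: sum_distrib_left sum_distrib_right mult.assoc) (rule sum.swap)
    also have "\<dots> = (\<Sum>b\<in>UNIV. x $ b * (if b = a then real N / 2 else 0))"
      by (simp only: entries)
    also have "\<dots> = ((real N / 2) *\<^sub>R x) $ a" by (simp add: if_distrib cong: if_cong)
    finally show "(\<Sum>j\<in>{1..N}. (x \<bullet> e j) *\<^sub>R e j) $ a = ((real N / 2) *\<^sub>R x) $ a" .
  qed
qed

definition quant_err :: "real \<Rightarrow> real \<Rightarrow> real" where
  "quant_err \<delta> t = t - Qd \<delta> t"

definition quant_corr :: "real \<Rightarrow> real \<Rightarrow> real" where
  "quant_corr \<delta> t = quant_err \<delta> t * t"

lemma quant_err_bound:
  assumes "\<delta> > 0"
  shows "\<bar>quant_err \<delta> t\<bar> \<le> \<delta> / 2"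
proof -
  define n where "n = \<lfloor>t / \<delta> + 1/2\<rfloor>"
  have "real_of_int n \<le> t / \<delta> + 1/2" "t / \<delta> + 1/2 < real_of_int n + 1"
    unfolding n_def by linarith+
  hence "\<delta> * real_of_int n \<le> t + \<delta> / 2" "t + \<delta> / 2 < \<delta> * real_of_int n + \<delta>"
    using assms by (simp_all add: field_simps)
  thus ?thesis unfolding quant_err_def Qd_def n_def[symmetric] by linarith
qed

lemma Ed_quant_err:
  assumes "untf N e"
  shows "Ed \<delta> x N e = norm ((2 / real N) *\<^sub>R (\<Sum>j\<in>{1..N}. quant_err \<delta> (x \<bullet> e j) *\<^sub>R e j))"
proof -
  have "N > 0" using assms unfolding untf_def by simp
  hence "x = (2 / real N) *\<^sub>R (\<Sum>j\<in>{1..N}. (x \<bullet> e j) *\<^sub>R e j)"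
    unfolding frame_reconstruction[OF assms] by simp
  hence "x - (2 / real N) *\<^sub>R (\<Sum>j\<in>{1..N}. Qd \<delta> (x \<bullet> e j) *\<^sub>R e j)
      = (2 / real N) *\<^sub>R ((\<Sum>j\<in>{1..N}. (x \<bullet> e j) *\<^sub>R e j) - (\<Sum>j\<in>{1..N}. Qd \<delta> (x \<bullet> e j) *\<^sub>R e j))"
    by (simp add: scaleR_diff_right)
  also have "\<dots> = (2 / real N) *\<^sub>R (\<Sum>j\<in>{1..N}. quant_err \<delta> (x \<bullet> e j) *\<^sub>R e j)"
    unfolding quant_err_def by (simp add: scaleR_diff_left sum_subtractf)
  finally show ?thesis unfolding Ed_def by simp
qed

text \<open>The error never exceeds the step size; this makes the squared error integrable.\<close>
lemma Ed_le_step: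
  assumes u: "untf N e" and d: "\<delta> > 0"
  shows "Ed \<delta> x N e \<le> \<delta>"
proof -
  have N: "N > 0" and unit: "\<And>j. j \<in> {1..N} \<Longrightarrow> norm (e j) = 1"
    using u unfolding untf_def by auto
  have "norm (\<Sum>j\<in>{1..N}. quant_err \<delta> (x \<bullet> e j) *\<^sub>R e j)
      \<le> (\<Sum>j\<in>{1..N}. norm (quant_err \<delta> (x \<bullet> e j) *\<^sub>R e j))"
    by (rule norm_sum)
  also have "\<dots> \<le> (\<Sum>j\<in>{1..N}. \<delta> / 2)"
    using unit quant_err_bound[OF d] by (intro sum_mono) simp
  finally have "norm (\<Sum>j\<in>{1..N}. quant_err \<delta> (x \<bullet> e j) *\<^sub>R e j) \<le> real N * \<delta> / 2"
    by simp
  thus ?thesis unfolding Ed_quant_err[OF u] using N by (simp add: field_simps)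
qed

text \<open>Testing the error vector against x itself (Cauchy-Schwarz) bounds E from below by a
  sum of scalar correlations; this is the quantity whose circle average can be computed.\<close>
lemma Ed_ge_corr:
  assumes u: "untf N e" and x: "norm x = r" "r > 0"
  shows "\<bar>(2 / (real N * r)) * (\<Sum>j\<in>{1..N}. quant_corr \<delta> (x \<bullet> e j))\<bar> \<le> Ed \<delta> x N e"
proof -
  define w where "w = (2 / real N) *\<^sub>R (\<Sum>j\<in>{1..N}. quant_err \<delta> (x \<bullet> e j) *\<^sub>R e j)"
  have "w \<bullet> x = (2 / real N) * (\<Sum>j\<in>{1..N}. quant_err \<delta> (x \<bullet> e j) * (e j \<bullet> x))"
    unfolding w_def by (simp add: inner_sum_left)
  hence "w \<bullet> x = (2 / real N) * (\<Sum>j\<in>{1..N}. quant_corr \<delta> (x \<bullet> e j))"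
    unfolding quant_corr_def by (simp add: inner_commute)
  moreover have "N > 0" using u unfolding untf_def by simp
  ultimately have "(2 / (real N * r)) * (\<Sum>j\<in>{1..N}. quant_corr \<delta> (x \<bullet> e j)) = (w \<bullet> x) / r"
    by simp
  moreover have "\<bar>w \<bullet> x\<bar> \<le> Ed \<delta> x N e * r"
    using Cauchy_Schwarz_ineq2[of w x] x(1) unfolding w_def Ed_quant_err[OF u] by simp
  ultimately show ?thesis using x(2) by (simp add: abs_divide pos_divide_le_eq)
qed

lemma norm_xpsi: "r \<ge> 0 \<Longrightarrow> norm (xpsi r \<psi>) = r"
proof -
  assume r: "r \<ge> 0"
  have "(norm (xpsi r \<psi>))^2 = (r * cos \<psi>)^2 + (r * sin \<psi>)^2"
    unfolding power2_norm_eq_inner xpsi_def by (simp add: inner_vec_def sum_2 power2_eq_square)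
  also have "\<dots> = r^2" by (simp add: power_mult_distrib flip: distrib_left)
  finally show ?thesis using r by (simp add: power2_eq_iff_nonneg)
qed

lemma xpsi_inner_unit:
  assumes "e $ 1 = cos \<theta>" "e $ 2 = sin \<theta>"
  shows "xpsi r \<psi> \<bullet> e = r * cos (\<psi> - \<theta>)"
  using assms unfolding xpsi_def by (simp add: inner_vec_def sum_2 cos_diff algebra_simps)

lemma unit_vector_angle:
  fixes e :: "real^2"
  assumes "norm e = 1"
  obtains \<theta> where "0 \<le> \<theta>" "\<theta> < 2*pi" "e $ 1 = cos \<theta>" "e $ 2 = sin \<theta>"
proof -
  have "(e $ 1)^2 + (e $ 2)^2 = 1"
    using power2_norm_eq_inner[of e] assms by (simp add: inner_vec_def sum_2 power2_eq_square)
  thus ?thesis using sincos_total_2pi that by blast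
qed

lemma Ed_circle_sq_integrable:
  assumes u: "untf N e" and d: "\<delta> > 0"
  shows "(\<lambda>\<psi>. (Ed \<delta> (xpsi r \<psi>) N e)^2) integrable_on {0..2*pi}"
proof (rule measurable_bounded_by_integrable_imp_integrable_real)
  have xpsi_axes: "xpsi r \<psi> = (r * cos \<psi>) *\<^sub>R axis 1 1 + (r * sin \<psi>) *\<^sub>R axis 2 1" for \<psi>
    unfolding xpsi_def by (simp add: vec_eq_iff forall_2 axis_def)
  have "(\<lambda>\<psi>. (Ed \<delta> (xpsi r \<psi>) N e)^2) \<in> borel_measurable borel"
    unfolding Ed_def Qd_def xpsi_axes by measurable
  hence "(\<lambda>\<psi>. (Ed \<delta> (xpsi r \<psi>) N e)^2) \<in> borel_measurable lebesgue"
    by (intro measurable_completion) simp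
  thus "(\<lambda>\<psi>. (Ed \<delta> (xpsi r \<psi>) N e)^2) \<in> borel_measurable (lebesgue_on {0..2*pi})"
    by (rule measurable_restrict_space1)
  show "\<bar>(Ed \<delta> (xpsi r \<psi>) N e)^2\<bar> \<le> \<delta>^2" for \<psi>
    using Ed_le_step[OF u d] by (simp add: Ed_def power_mono)
qed auto


section \<open>An L2 lower bound\<close>

lemma energy_ge_mean:
  fixes h E :: "real \<Rightarrow> real"
  assumes ab: "a < b" and hI: "(h has_integral I) {a..b}"
    and E2: "(\<lambda>x. (E x)^2) integrable_on {a..b}"
    and dom: "\<And>x. x \<in> {a..b} \<Longrightarrow> \<bar>h x\<bar> \<le> E x"
  shows "I^2 / (b - a) \<le> integral {a..b} (\<lambda>x. (E x)^2)"
proof -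
  define m where "m = I / (b - a)"
  have "((\<lambda>x. 2 * m * h x - m^2) has_integral (2 * m * I - (b - a) * m^2)) {a..b}"
    using has_integral_const_real[of "m^2" a b] ab
    by (intro has_integral_diff has_integral_mult_right hI) auto
  moreover have "2 * m * h x - m^2 \<le> (E x)^2" if "x \<in> {a..b}" for x
  proof -
    have "2 * m * h x - m^2 \<le> (h x)^2" using zero_le_power2[of "h x - m"]
      by (simp add: power2_diff algebra_simps)
    also have "\<dots> \<le> (E x)^2" using dom[OF that] by (metis abs_ge_zero power2_abs power_mono)
    finally show ?thesis .
  qed
  ultimately have "2 * m * I - (b - a) * m^2 \<le> integral {a..b} (\<lambda>x. (E x)^2)"
    using has_integral_le[OF _ integrable_integral[OF E2]] by blast
  moreover have "2 * m * I - (b - a) * m^2 = I^2 / (b - a)"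
    unfolding m_def using ab by (simp add: power_divide) (simp add: power2_eq_square divide_simps)
  ultimately show ?thesis by simp
qed


section \<open>Integrals over the circle\<close>

lemma periodic_shift:
  fixes f :: "real \<Rightarrow> real"
  assumes per: "\<And>x. f (x + 2*pi) = f x" and int: "(f has_integral J) {0..2*pi}"
    and th: "0 \<le> \<theta>" "\<theta> \<le> 2*pi"
  shows "((\<lambda>x. f (x - \<theta>)) has_integral J) {0..2*pi}"
proof -
  have fi: "f integrable_on {0..2*pi}" using int by blast
  define A where "A = integral {0..2*pi-\<theta>} f"
  define B where "B = integral {2*pi-\<theta>..2*pi} f"
  have A: "(f has_integral A) {0..2*pi-\<theta>}" unfolding A_def
    using integrable_subinterval_real[OF fi] th by (intro integrable_integral) auto
  have B: "(f has_integral B) {2*pi-\<theta>..2*pi}" unfolding B_def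
    using integrable_subinterval_real[OF fi] th by (intro integrable_integral) auto
  have "(f has_integral A + B) {0..2*pi}"
    using has_integral_combine[OF _ _ A B] th by auto
  hence AB: "A + B = J" using int has_integral_unique by blast
  have "((f \<circ> (+) (2*pi)) has_integral B) {-\<theta>..0}"
    using B by (subst has_integral_shift_Icc_real) (simp add: add.commute)
  moreover have "f \<circ> (+) (2*pi) = f" using per by (auto simp: fun_eq_iff add.commute)
  ultimately have B': "(f has_integral B) {-\<theta>..0}" by simp
  have "(f has_integral B + A) {-\<theta>..2*pi-\<theta>}"
    using has_integral_combine[OF _ _ B' A] th by auto
  hence "((f \<circ> (+) (-\<theta>)) has_integral J) {0..2*pi}"
    using AB by (subst has_integral_shift_Icc_real) (simp add: add.commute)
  thus ?thesis by (simp add: o_def)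
qed

lemma integral_cos_period: "(cos has_integral 0) {0..2*pi}"
proof -
  have "(cos has_integral (sin (2*pi) - sin 0)) {0..2*pi}"
    by (intro fundamental_theorem_of_calculus)
      (auto intro!: derivative_eq_intros simp: has_real_derivative_iff_has_vector_derivative[symmetric])
  thus ?thesis by simp
qed

lemma integral_cos_sq_period: "((\<lambda>\<psi>. (cos \<psi>)^2) has_integral pi) {0..2*pi}"
proof -
  have "((\<lambda>x. x/2 + sin (2*x)/4) has_real_derivative (cos x)^2) (at x)" for x
  proof -
    have "((\<lambda>x. x/2 + sin (2*x)/4) has_real_derivative (1/2 + cos (2*x)/2)) (at x)"
      by (auto intro!: derivative_eq_intros)
    moreover have "1/2 + cos (2*x)/2 = (cos x)^2"
      using cos_double_cos[of x] by (simp add: field_simps)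
    ultimately show ?thesis by metis
  qed
  hence "((\<lambda>\<psi>. (cos \<psi>)^2) has_integral ((2*pi)/2 + sin (2*(2*pi))/4 - (0/2 + sin (2*0)/4))) {0..2*pi}"
    by (intro fundamental_theorem_of_calculus)
      (simp_all add: has_real_derivative_iff_has_vector_derivative[symmetric] has_field_derivative_at_within)
  thus ?thesis by simp
qed

lemma cos_less_iff_arc:
  assumes c: "-1 \<le> c" "c \<le> 1" and psi: "\<psi> \<in> {0..2*pi}"
  shows "cos \<psi> < c \<longleftrightarrow> arccos c < \<psi> \<and> \<psi> < 2*pi - arccos c"
proof -
  define b where "b = arccos c"
  have b: "0 \<le> b" "b \<le> pi" "cos b = c" using arccos_bounded[OF c] c by (auto simp: b_def)
  have p: "0 \<le> \<psi>" "\<psi> \<le> 2*pi" using psi by auto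
  have "cos \<psi> < c \<longleftrightarrow> b < \<psi> \<and> \<psi> < 2*pi - b"
  proof (cases "\<psi> \<le> pi")
    case True
    thus ?thesis using p b cos_mono_less_eq[of \<psi> b] by auto
  next
    case False
    have "cos \<psi> = cos (2*pi - \<psi>)" by (simp add: cos_diff)
    thus ?thesis using p b False cos_mono_less_eq[of "2*pi - \<psi>" b] by auto
  qed
  thus ?thesis by (simp add: b_def)
qed

lemma integral_cos_below:
  assumes c: "-1 \<le> c" "c \<le> 1"
  shows "((\<lambda>\<psi>. if cos \<psi> < c then cos \<psi> else 0) has_integral (-2 * sqrt (1 - c^2))) {0..2*pi}"
proof -
  define b where "b = arccos c"
  have b: "0 \<le> b" "b \<le> pi" using arccos_bounded[OF c] by (auto simp: b_def)
  have "(cos has_integral (sin (2*pi - b) - sin b)) {b..2*pi - b}"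
    using b by (intro fundamental_theorem_of_calculus)
      (auto intro!: derivative_eq_intros simp: has_real_derivative_iff_has_vector_derivative[symmetric])
  hence "((\<lambda>\<psi>. if \<psi> \<in> cbox b (2*pi - b) then cos \<psi> else 0) has_integral (sin (2*pi - b) - sin b))
      (cbox 0 (2*pi))"
    using b by (intro has_integral_restrict_closed_subinterval) auto
  hence arc: "((\<lambda>\<psi>. if \<psi> \<in> {b..2*pi - b} then cos \<psi> else 0) has_integral -2 * sqrt (1 - c^2))
      {0..2*pi}"
    using c by (simp add: b_def sin_arccos sin_diff)
  show ?thesis
  proof (rule has_integral_spike_finite[OF _ _ arc, of "{b, 2*pi - b}"])
    fix \<psi> assume "\<psi> \<in> {0..2*pi} - {b, 2*pi - b}"
    thus "(if cos \<psi> < c then cos \<psi> else 0) = (if \<psi> \<in> {b..2*pi - b} then cos \<psi> else 0)"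
      using cos_less_iff_arc[OF c, of \<psi>] by (auto simp: b_def)
  qed simp
qed

lemma integral_cos_above:
  assumes c: "-1 \<le> c" "c \<le> 1"
  shows "((\<lambda>\<psi>. if c \<le> cos \<psi> then cos \<psi> else 0) has_integral (2 * sqrt (1 - c^2))) {0..2*pi}"
proof -
  have "((\<lambda>\<psi>. cos \<psi> - (if cos \<psi> < c then cos \<psi> else 0)) has_integral (0 - (-2 * sqrt (1 - c^2))))
      {0..2*pi}"
    by (intro has_integral_diff integral_cos_period integral_cos_below c)
  moreover have "(\<lambda>\<psi>. cos \<psi> - (if cos \<psi> < c then cos \<psi> else 0)) = (\<lambda>\<psi>. if c \<le> cos \<psi> then cos \<psi> else 0)"
    by (auto simp: fun_eq_iff)
  ultimately show ?thesis by simp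
qed

lemma round_as_step_sum:
  fixes y :: real and k :: nat
  assumes "-(real k + 1/2) \<le> y" "y < real k + 1/2"
  shows "real_of_int \<lfloor>y + 1/2\<rfloor> =
    (\<Sum>m=1..k. (if real m - 1/2 \<le> y then 1 else 0) - (if y < -(real m - 1/2) then 1 else 0))"
proof -
  define n where "n = \<lfloor>y + 1/2\<rfloor>"
  have n_range: "- int k \<le> n" "n \<le> int k"
    using assms unfolding n_def by (auto simp: le_floor_iff floor_le_iff)
  have up: "real m - 1/2 \<le> y \<longleftrightarrow> int m \<le> n" for m :: nat
    unfolding n_def le_floor_iff by auto
  have down: "y < 1/2 - real m \<longleftrightarrow> n \<le> - int m" for m :: nat
  proof -
    have "n \<le> - int m \<longleftrightarrow> n < 1 - int m" by auto
    also have "\<dots> \<longleftrightarrow> y + 1/2 < real_of_int (1 - int m)" unfolding n_def floor_less_iff by simp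
    finally show ?thesis by auto
  qed
  have clamp: "(\<Sum>m=1..j. (if int m \<le> n then 1 else 0) - (if n \<le> - int m then 1 else 0) :: int)
      = max (- int j) (min (int j) n)" for j
    by (induction j) (auto simp: sum.cl_ivl_Suc)
  have "(\<Sum>m=1..k. (if real m - 1/2 \<le> y then 1 else 0) - (if y < -(real m - 1/2) then 1 else 0) :: real)
      = real_of_int (\<Sum>m=1..k. (if int m \<le> n then 1 else 0) - (if n \<le> - int m then 1 else 0) :: int)"
    unfolding of_int_sum by (intro sum.cong refl) (simp add: up down)
  also have "\<dots> = real_of_int n" unfolding clamp using n_range by simp
  finally show ?thesis unfolding n_def by simp
qed

text \<open>Closed form of the circle average J of the correlation G(r cos psi) at half-integer
  radius: the quantizer splits into level sets of cos at the levels (m - 1/2)/R.\<close>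
lemma integral_corr_circle:
  assumes d: "\<delta> > 0" and r: "r = (real k + 1/2) * \<delta>"
  shows "((\<lambda>\<psi>. quant_corr \<delta> (r * cos \<psi>)) has_integral
     (pi * r^2 - 4 * \<delta> * r * (\<Sum>m=1..k. sqrt (1 - ((real m - 1/2) / (real k + 1/2))^2)))) {0..2*pi}"
proof -
  define R where "R = real k + 1/2"
  define c where "c m = (real m - 1/2) / R" for m :: nat
  have R: "R > 0" unfolding R_def by simp
  have c_range: "-1 \<le> c m" "c m \<le> 1" "-1 \<le> - c m" "- c m \<le> 1" if "m \<in> {1..k}" for m
  proof -
    have "0 \<le> c m" "c m \<le> 1" using that R unfolding c_def R_def by (auto simp: field_simps)
    thus "-1 \<le> c m" "c m \<le> 1" "-1 \<le> - c m" "- c m \<le> 1" by auto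
  qed
  define F where "F \<psi> = r^2 * (cos \<psi>)^2 - \<delta> * r * (\<Sum>m=1..k.
      (if c m \<le> cos \<psi> then cos \<psi> else 0) - (if cos \<psi> < - c m then cos \<psi> else 0))" for \<psi>
  have "(F has_integral (r^2 * pi - \<delta> * r *
      (\<Sum>m=1..k. 2 * sqrt (1 - (c m)^2) - (-2 * sqrt (1 - (- c m)^2))))) {0..2*pi}"
    unfolding F_def
    by (intro has_integral_diff has_integral_mult_right has_integral_sum finite_atLeastAtMost
        integral_cos_sq_period integral_cos_above integral_cos_below c_range) auto
  moreover have "(\<Sum>m=1..k. 2 * sqrt (1 - (c m)^2) - (-2 * sqrt (1 - (- c m)^2)))
      = 4 * (\<Sum>m=1..k. sqrt (1 - ((real m - 1/2) / (real k + 1/2))^2))"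
    unfolding c_def R_def sum_distrib_left by (intro sum.cong refl) simp
  ultimately have F_int: "(F has_integral (pi * r^2 - 4 * \<delta> * r *
      (\<Sum>m=1..k. sqrt (1 - ((real m - 1/2) / (real k + 1/2))^2)))) {0..2*pi}"
    by (simp add: algebra_simps)
  show ?thesis
  proof (rule has_integral_spike_finite[OF _ _ F_int, of "{0, 2*pi}"])
    fix \<psi> assume p: "\<psi> \<in> {0..2*pi} - {0, 2*pi}"
    have "cos \<psi> < 1" using p cos_less_iff_arc[of 1 \<psi>] by auto
    define y where "y = R * cos \<psi>"
    have "R * (-1) \<le> R * cos \<psi>" "R * cos \<psi> < R * 1"
      using \<open>cos \<psi> < 1\<close> R by (intro mult_left_mono mult_strict_left_mono; simp)+
    hence y_range: "-(real k + 1/2) \<le> y" "y < real k + 1/2" unfolding y_def R_def by auto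
    have steps: "real m - 1/2 \<le> y \<longleftrightarrow> c m \<le> cos \<psi>" "y < -(real m - 1/2) \<longleftrightarrow> cos \<psi> < - c m" for m
      unfolding y_def c_def using R by (simp_all add: field_simps)
    have "Qd \<delta> (r * cos \<psi>) = \<delta> * real_of_int \<lfloor>y + 1/2\<rfloor>"
      unfolding Qd_def y_def r R_def using d by simp
    also have "\<dots> = \<delta> * (\<Sum>m=1..k. (if c m \<le> cos \<psi> then 1 else 0) - (if cos \<psi> < - c m then 1 else 0))"
      unfolding round_as_step_sum[OF y_range] steps ..
    moreover have "(\<Sum>m=1..k. (if c m \<le> cos \<psi> then 1 else 0) - (if cos \<psi> < - c m then 1 else 0)) * cos \<psi>
        = (\<Sum>m=1..k. (if c m \<le> cos \<psi> then cos \<psi> else 0) - (if cos \<psi> < - c m then cos \<psi> else 0))"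
      unfolding sum_distrib_right by (intro sum.cong refl) auto
    ultimately have Q: "Qd \<delta> (r * cos \<psi>) * cos \<psi> = \<delta> * (\<Sum>m=1..k.
        (if c m \<le> cos \<psi> then cos \<psi> else 0) - (if cos \<psi> < - c m then cos \<psi> else 0))"
      by simp
    have "quant_corr \<delta> (r * cos \<psi>) = r^2 * (cos \<psi>)^2 - r * (Qd \<delta> (r * cos \<psi>) * cos \<psi>)"
      unfolding quant_corr_def quant_err_def by (simp add: power2_eq_square algebra_simps)
    thus "quant_corr \<delta> (r * cos \<psi>) = F \<psi>" unfolding Q F_def by (simp add: algebra_simps)
  qed simp
qed

text \<open>Every frame vector sees the same circle average J, so the frame sum averages to N J.\<close>
lemma integral_frame_corr:
  assumes u: "untf N e"
    and J: "((\<lambda>\<psi>. quant_corr \<delta> (r * cos \<psi>)) has_integral J) {0..2*pi}"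
  shows "((\<lambda>\<psi>. \<Sum>j\<in>{1..N}. quant_corr \<delta> (xpsi r \<psi> \<bullet> e j)) has_integral real N * J) {0..2*pi}"
proof -
  have "((\<lambda>\<psi>. quant_corr \<delta> (xpsi r \<psi> \<bullet> e j)) has_integral J) {0..2*pi}" if j: "j \<in> {1..N}" for j
  proof -
    have "norm (e j) = 1" using u j unfolding untf_def by auto
    then obtain \<theta> where th: "0 \<le> \<theta>" "\<theta> < 2*pi" "e j $ 1 = cos \<theta>" "e j $ 2 = sin \<theta>"
      by (rule unit_vector_angle)
    have "((\<lambda>\<psi>. (\<lambda>x. quant_corr \<delta> (r * cos x)) (\<psi> - \<theta>)) has_integral J) {0..2*pi}"
      by (rule periodic_shift[OF _ J]) (use th in auto)
    thus ?thesis using xpsi_inner_unit[OF th(3,4)] by simp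
  qed
  hence "((\<lambda>\<psi>. \<Sum>j\<in>{1..N}. quant_corr \<delta> (xpsi r \<psi> \<bullet> e j)) has_integral (\<Sum>j\<in>{1..N}. J)) {0..2*pi}"
    by (intro has_integral_sum) auto
  thus ?thesis by simp
qed

lemma MSE_ge_circle_average:
  assumes u: "untf N e" and r: "r > 0" and d: "\<delta> > 0"
    and J: "((\<lambda>\<psi>. quant_corr \<delta> (r * cos \<psi>)) has_integral J) {0..2*pi}"
  shows "2 * J / (r * sqrt (2*pi)) \<le> MSE \<delta> r N e"
proof -
  have N: "N > 0" using u unfolding untf_def by simp
  define h where "h \<psi> = (2 / (real N * r)) * (\<Sum>j\<in>{1..N}. quant_corr \<delta> (xpsi r \<psi> \<bullet> e j))" for \<psi>
  have "(h has_integral (2 / (real N * r)) * (real N * J)) {0..2*pi}"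
    unfolding h_def by (intro has_integral_mult_right integral_frame_corr[OF u J])
  hence h_int: "(h has_integral 2 * J / r) {0..2*pi}" using N by simp
  have "\<bar>h \<psi>\<bar> \<le> Ed \<delta> (xpsi r \<psi>) N e" for \<psi>
    unfolding h_def using r by (intro Ed_ge_corr[OF u norm_xpsi]) auto
  hence "(2 * J / r)^2 / (2*pi - 0) \<le> integral {0..2*pi} (\<lambda>\<psi>. (Ed \<delta> (xpsi r \<psi>) N e)^2)"
    by (intro energy_ge_mean[OF _ h_int Ed_circle_sq_integrable[OF u d]]) auto
  hence "sqrt ((2 * J / r)^2 / (2*pi)) \<le> MSE \<delta> r N e" unfolding MSE_def by simp
  moreover have "2 * J / (r * sqrt (2*pi)) \<le> \<bar>2 * J / r\<bar> / sqrt (2*pi)"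
    using r by (simp flip: divide_divide_eq_left) (intro divide_right_mono; simp)
  moreover have "\<bar>2 * J / r\<bar> / sqrt (2*pi) = sqrt ((2 * J / r)^2 / (2*pi))"
    by (simp add: real_sqrt_divide)
  ultimately show ?thesis by linarith
qed


section \<open>The discrete estimate\<close>

lemma sin_le_taylor5:
  fixes x :: real assumes "0 \<le> x" shows "sin x \<le> x - x^3/6 + x^5/120"
proof -
  have "\<bar>sin x - (\<Sum>m<5. sin_coeff m * x ^ m)\<bar> \<le> inverse (fact 5) * \<bar>x\<bar> ^ 5"
    by (rule Maclaurin_sin_bound)
  moreover have "(\<Sum>m<5. sin_coeff m * x ^ m) = x - x^3/6"
  proof -
    have "{..<5::nat} = {0, 1, 2, 3, 4}" by auto
    thus ?thesis by (simp add: sin_coeff_def fact_numeral)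
  qed
  moreover have "inverse (fact 5) * \<bar>x\<bar> ^ 5 = x^5/120"
    using assms by (simp add: fact_numeral field_simps)
  ultimately show ?thesis by linarith
qed

lemma x_minus_sin_cubic:
  fixes x :: real
  assumes "0 \<le> x" "x \<le> pi/2"
  shows "4 / (3 * pi^2) * x^3 \<le> x - sin x"
proof -
  have p: "3.14 \<le> pi" "pi \<le> 3.15" using pi_approx by auto
  have "9.8 \<le> pi^2" "pi^2 \<le> 10"
    using power_mono[OF p(1), of 2] power_mono[OF p(2), of 2] by (simp_all add: power2_eq_square)
  hence "9.8 * 70 \<le> pi^2 * (80 - pi^2)" by (intro mult_mono) auto
  hence "4 / (3 * pi^2) \<le> 1/6 - pi^2/480" by (simp add: field_simps)
  also have "\<dots> \<le> 1/6 - x^2/120"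
    using power_mono[of x "pi/2" 2] assms by (simp add: power_divide)
  finally have "4 / (3 * pi^2) * x^3 \<le> (1/6 - x^2/120) * x^3" using assms by (intro mult_right_mono) auto
  also have "\<dots> = x^3/6 - x^5/120" by (simp add: field_simps eval_nat_numeral)
  also have "\<dots> \<le> x - sin x" using sin_le_taylor5[OF assms(1)] by linarith
  finally show ?thesis .
qed

text \<open>The arc length arccos c is at least sqrt(2 (1 - c)), since 1 - cos x \<le> x^2/2.\<close>
lemma arccos_cube_ge:
  assumes "0 \<le> c" "c \<le> 1"
  shows "2 * (1 - c) * sqrt (2 * (1 - c)) \<le> (arccos c)^3"
proof -
  define \<alpha> where "\<alpha> = arccos c"
  have \<alpha>: "0 \<le> \<alpha>" "cos \<alpha> = c" using assms arccos_lbound by (auto simp: \<alpha>_def)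
  have "cos \<alpha> = 1 - 2 * sin (\<alpha>/2) ^ 2" using cos_double_sin[of "\<alpha>/2"] by simp
  moreover have "sin (\<alpha>/2) ^ 2 \<le> (\<alpha>/2)^2"
    using abs_sin_x_le_abs_x[of "\<alpha>/2"] by (metis abs_ge_zero power2_abs power_mono)
  ultimately have sq: "2 * (1 - c) \<le> \<alpha>^2" using \<alpha> by (simp add: power_divide)
  have "sqrt (2 * (1 - c)) \<le> \<alpha>" using sq \<alpha> by (intro real_le_lsqrt) auto
  hence "2 * (1 - c) * sqrt (2 * (1 - c)) \<le> \<alpha>^2 * \<alpha>" using sq \<alpha> assms by (intro mult_mono) auto
  thus ?thesis by (simp add: \<alpha>_def power3_eq_cube power2_eq_square)
qed

lemma le_arcsin:
  assumes "0 \<le> c" "c \<le> 1"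
  shows "c \<le> pi/2 - arccos c"
proof -
  have "c = sin (arcsin c)" using assms by simp
  also have "\<dots> \<le> arcsin c" using assms arcsin_le_arcsin[of 0 c] by (intro sin_x_le_x) simp
  finally show ?thesis using arcsin_arccos_eq[of c] assms by simp
qed

text \<open>A chord of the unit circle between heights a \<le> b is shorter than the arc:
  sin (arccos a - arccos b) \<le> arccos a - arccos b.\<close>
lemma chord_le_arc:
  assumes "0 \<le> a" "a \<le> b" "b \<le> 1"
  shows "sqrt (1 - a^2) * b - a * sqrt (1 - b^2) \<le> arccos a - arccos b"
proof -
  have "sqrt (1 - a^2) * b - a * sqrt (1 - b^2) = sin (arccos a - arccos b)"
    using assms by (simp add: sin_diff sin_arccos)
  also have "\<dots> \<le> arccos a - arccos b"
    using assms by (intro sin_x_le_x) (simp add: arccos_le_arccos)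
  finally show ?thesis .
qed

text \<open>Summation by parts for equally spaced c: the discrete analogue of
  int (s dc - c ds) = 2 int s dc + boundary terms.\<close>
lemma summation_by_parts_equispaced:
  fixes s c :: "nat \<Rightarrow> real"
  assumes "\<And>m. c (Suc m) = c m + d"
  shows "(\<Sum>m=1..n. s m * c (Suc m) - c m * s (Suc m))
       = d * (2 * (\<Sum>m=1..n. s m) - s 1 + s (Suc n)) + c 1 * s 1 - c (Suc n) * s (Suc n)"
proof (induction n)
  case (Suc n)
  show ?case unfolding sum.cl_ivl_Suc Suc using assms[of "Suc n"] by (simp add: algebra_simps)
qed (simp add: algebra_simps)

text \<open>Riemann-sum comparison: twice the midpoint sum of sqrt(1 - c^2) with step 1/R falls short
  of pi/2 (twice the quarter-disc area) at least by the defect x - sin x of the last arc.\<close>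
lemma midpoint_sum_le:
  assumes k: "k \<ge> 1" and R: "R = real k + 1/2"
  defines "c \<equiv> \<lambda>m::nat. (real m - 1/2) / R"
  shows "(2/R) * (\<Sum>m=1..k. sqrt (1 - (c m)^2))
           \<le> pi/2 - (arccos (c k) - sqrt (1 - (c k)^2))"
proof -
  define s where "s m = sqrt (1 - (c m)^2)" for m
  define \<alpha> where "\<alpha> m = arccos (c m)" for m
  have R0: "R > 0" using R by simp
  have c_range: "0 \<le> c m" "c m \<le> 1" if "1 \<le> m" "m \<le> Suc k" for m
    using that R0 unfolding c_def R by (auto simp: field_simps)
  have c_step: "c (Suc m) = c m + 1/R" for m unfolding c_def using R0 by (simp add: field_simps)
  have c_last: "c (Suc k) = 1" and c_first: "c 1 = 1/(2*R)" unfolding c_def R by simp_all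
  hence s_last: "s (Suc k) = 0" by (simp add: s_def)
  obtain j where j: "k = Suc j" using k by (cases k) auto
  have chord: "s m * c (Suc m) - c m * s (Suc m) \<le> \<alpha> m - \<alpha> (Suc m)" if "1 \<le> m" "m \<le> j" for m
    unfolding s_def \<alpha>_def using c_range[of m] c_range[of "Suc m"] c_step[of m] that j R0
    by (intro chord_le_arc) auto
  have "(\<Sum>m=1..k. s m * c (Suc m) - c m * s (Suc m))
      = (\<Sum>m=1..j. s m * c (Suc m) - c m * s (Suc m)) + s k"
    using c_last s_last by (simp add: j)
  also have "\<dots> \<le> (\<Sum>m=1..j. \<alpha> m - \<alpha> (Suc m)) + s k"
    using chord by (intro add_right_mono sum_mono) auto
  also have "\<dots> = \<alpha> 1 - \<alpha> k + s k"
    using sum_Suc_diff[of 1 j "\<lambda>i. - \<alpha> i"] j by simp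
  finally have "(2/R) * (\<Sum>m=1..k. s m) - c 1 * s 1 \<le> \<alpha> 1 - \<alpha> k + s k"
    unfolding summation_by_parts_equispaced[of c "1/R", OF c_step] c_last s_last c_first
    using R0 by (simp add: field_simps)
  moreover have "c 1 * s 1 \<le> c 1"
    using c_range[of 1] k by (intro mult_left_le) (auto simp: s_def)
  moreover have "c 1 \<le> pi/2 - \<alpha> 1" unfolding \<alpha>_def using c_range[of 1] k by (intro le_arcsin) auto
  ultimately show ?thesis unfolding s_def \<alpha>_def by linarith
qed

lemma midpoint_sum_gap:
  assumes R: "R = real k + 1/2"
  shows "(8 / (3 * pi^2)) * (2/R) * sqrt (2/R)
           \<le> pi - 4/R * (\<Sum>m=1..k. sqrt (1 - ((real m - 1/2) / R)^2))"
proof (cases "k = 0")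
  case True
  have R_half: "R = 1/2" using True R by simp
  have "3^3 \<le> pi^3" using pi_gt3 by (intro power_mono) auto
  hence "64 / (3 * pi^2) \<le> pi" by (simp add: field_simps eval_nat_numeral)
  moreover have "2/R = 4" "sqrt 4 = 2" unfolding R_half by simp_all
  ultimately show ?thesis using True by simp
next
  case False
  define c where "c = (real k - 1/2) / R"
  define \<alpha> where "\<alpha> = arccos c"
  have R0: "R \<ge> 3/2" using R False by simp
  have c: "0 \<le> c" "c \<le> 1" "1 - c = 1/R" using R0 unfolding c_def R by (auto simp: field_simps)
  have \<alpha>: "0 \<le> \<alpha>" "\<alpha> \<le> pi/2" "sin \<alpha> = sqrt (1 - c^2)"
    using c arccos_lbound arccos_le_pi2 by (auto simp: \<alpha>_def sin_arccos)
  have "(2/R) * sqrt (2/R) \<le> \<alpha>^3" using arccos_cube_ge[OF c(1,2)] by (simp add: c(3) \<alpha>_def)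
  hence "(8 / (3 * pi^2)) * ((2/R) * sqrt (2/R)) \<le> (8 / (3 * pi^2)) * \<alpha>^3"
    by (intro mult_left_mono) auto
  also have "\<dots> = 2 * (4 / (3 * pi^2) * \<alpha>^3)" by simp
  also have "\<dots> \<le> 2 * (\<alpha> - sin \<alpha>)" using x_minus_sin_cubic[OF \<alpha>(1,2)] by simp
  also have "\<dots> \<le> pi - 4/R * (\<Sum>m=1..k. sqrt (1 - ((real m - 1/2) / R)^2))"
    using midpoint_sum_le[OF _ R] False \<alpha>(3) by (simp add: c_def \<alpha>_def)
  finally show ?thesis by (simp add: mult.assoc)
qed


lemma half_integer_ratio:
  assumes "r > 0" "\<delta> > 0" "r / \<delta> + 1/2 \<in> \<int>"
  obtains k :: nat where "r / \<delta> = real k + 1/2"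
proof -
  obtain n :: int where n: "r / \<delta> + 1/2 = of_int n" using assms(3) by (auto elim: Ints_cases)
  have "n \<ge> 1" using n assms(1,2) divide_pos_pos[of r \<delta>] by linarith
  thus ?thesis using n that[of "nat (n - 1)"] by simp
qed

lemma final_constant:
  fixes r \<delta> :: real
  assumes r: "r > 0" and d: "\<delta> > 0"
  shows "2 * (r^2 * ((8 / (3 * pi^2)) * (2/(r/\<delta>)) * sqrt (2/(r/\<delta>)))) / (r * sqrt (2*pi))
       = 32 / (3 * pi powr (5/2)) * \<delta> powr (3/2) / sqrt r"
proof -
  have powers: "pi powr (5/2) = pi^2 * sqrt pi" "\<delta> powr (3/2) = \<delta> * sqrt \<delta>"
    using powr_add[of pi 2 "1/2"] powr_add[of \<delta> 1 "1/2"] d by (simp_all add: powr_half_sqrt)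
  define a b where "a = sqrt r" and "b = sqrt \<delta>"
  have ab: "a > 0" "b > 0" "r = a^2" "\<delta> = b^2" using r d by (simp_all add: a_def b_def)
  have "sqrt (2/(r/\<delta>)) = sqrt 2 * b / a" "sqrt (2*pi) = sqrt 2 * sqrt pi"
    using ab by (simp_all add: real_sqrt_divide real_sqrt_mult)
  thus ?thesis unfolding powers a_def[symmetric] b_def[symmetric] using ab
    by (simp add: field_simps power2_eq_square)
qed

theorem theorem1p2:
  fixes r \<delta> :: real and N :: nat and e :: "nat \<Rightarrow> real^2"
  assumes "r > 0" and "\<delta> > 0" and "r / \<delta> + 1/2 \<in> \<int>"
    and "untf N e"
  shows "MSE \<delta> r N e \<ge> 32 / (3 * pi powr (5/2)) * \<delta> powr (3/2) / sqrt r"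
proof -
  note r = assms(1) and d = assms(2)
  obtain k :: nat where k: "r / \<delta> = real k + 1/2" using half_integer_ratio[OF assms(1-3)] .
  define R where "R = r / \<delta>"
  have rk: "r = (real k + 1/2) * \<delta>" and Rk: "R = real k + 1/2" using k d by (simp_all add: R_def field_simps)
  define S where "S = (\<Sum>m=1..k. sqrt (1 - ((real m - 1/2) / R)^2))"
  define J where "J = pi * r^2 - 4 * \<delta> * r * S"
  have "((\<lambda>\<psi>. quant_corr \<delta> (r * cos \<psi>)) has_integral J) {0..2*pi}"
    using integral_corr_circle[OF d rk] unfolding J_def S_def Rk .
  hence MSE_ge: "2 * J / (r * sqrt (2*pi)) \<le> MSE \<delta> r N e"
    using MSE_ge_circle_average[OF assms(4) r d] by blast
  have "r^2 * ((8 / (3 * pi^2)) * (2/R) * sqrt (2/R)) \<le> r^2 * (pi - 4/R * S)"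
    using midpoint_sum_gap[OF Rk] unfolding S_def[symmetric] by (intro mult_left_mono) auto
  also have "\<dots> = J" unfolding J_def R_def using r d by (simp add: field_simps power2_eq_square)
  finally have "r^2 * ((8 / (3 * pi^2)) * (2/R) * sqrt (2/R)) \<le> J" .
  hence "2 * (r^2 * ((8 / (3 * pi^2)) * (2/R) * sqrt (2/R))) / (r * sqrt (2*pi))
      \<le> 2 * J / (r * sqrt (2*pi))" using r by (intro divide_right_mono mult_left_mono) auto
  thus ?thesis using MSE_ge final_constant[OF r d] unfolding R_def by linarith
qed

end
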